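(* Let $A,W\in \mathbb{C}^{n\times n}$. Then $A^{\mathrm{cEP},W}=[A^{D,W}W]^2(A^{D,W})^{\mathrm{core},W}$.
   Context: $\mathbb{C}^{n\times n}$ carries the conjugate transpose involution. With $k=\max\{\mathrm{ind}(AW),\mathrm{ind}(WA)\}$, the weighted core-EP inverse $A^{\mathrm{cEP},W}$ is the unique $X$ with $WAWX=(WA)^k[(WA)^k]^{\dagger}$ and $\mathcal{R}(X)\subseteq\mathcal{R}((AW)^k)$. $A^{D,W}$ is the $W$-weighted Drazin inverse of $A$ (the unique $X$ with $AWX=XWA$, $XWAWX=X$, $A-AWXWA$ nilpotent). For $B\in\mathbb{C}^{n\times n}$, the $W$-weighted core inverse $B^{\mathrm{core},W}$ is the unique $X$ with $B(WX)^2=X$, $(WBWX)^*=WBWX$, $XW(BW)^2=BW$; the claim includes that it exists for $B=A^{D,W}$. *)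

theory Defs
  imports "HOL-Analysis.Analysis"
begin

type_synonym 'n cmat = "complex^'n^'n"

primrec mpow :: "'n::finite cmat \<Rightarrow> nat \<Rightarrow> 'n cmat" where
  "mpow M 0 = mat 1"
| "mpow M (Suc k) = M ** mpow M k"

definition ctrans :: "'n::finite cmat \<Rightarrow> 'n cmat" where
  "ctrans M = (\<chi> i j. cnj (M $ j $ i))"

definition mp_inv :: "'n::finite cmat \<Rightarrow> 'n cmat" where
  "mp_inv M = (THE X. M ** X ** M = M \<and> X ** M ** X = X
      \<and> ctrans (M ** X) = M ** X \<and> ctrans (X ** M) = X ** M)"

definition ind :: "'n::finite cmat \<Rightarrow> nat" where
  "ind M = (LEAST k. rank (mpow M k) = rank (mpow M (Suc k)))"

definition mrange :: "'n::finite cmat \<Rightarrow> (complex^'n) set" where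
  "mrange M = {M *v x | x. True}"

definition nilpotent_mat :: "'n::finite cmat \<Rightarrow> bool" where
  "nilpotent_mat M \<longleftrightarrow> (\<exists>m. mpow M m = 0)"

text \<open>W-weighted Drazin inverse (nilpotency of A - AWXWA read as W-nilpotency).\<close>
definition is_wdrazin :: "'n::finite cmat \<Rightarrow> 'n cmat \<Rightarrow> 'n cmat \<Rightarrow> bool" where
  "is_wdrazin A W X \<longleftrightarrow> A ** W ** X = X ** W ** A \<and> X ** W ** A ** W ** X = X
     \<and> nilpotent_mat ((A - A ** W ** X ** W ** A) ** W)"

definition wdrazin :: "'n::finite cmat \<Rightarrow> 'n cmat \<Rightarrow> 'n cmat" where
  "wdrazin A W = (THE X. is_wdrazin A W X)"

definition is_wcoreEP :: "'n::finite cmat \<Rightarrow> 'n cmat \<Rightarrow> 'n cmat \<Rightarrow> bool" where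
  "is_wcoreEP A W X \<longleftrightarrow>
     (let k = max (ind (A ** W)) (ind (W ** A)) in
       W ** A ** W ** X = mpow (W ** A) k ** mp_inv (mpow (W ** A) k)
       \<and> mrange X \<subseteq> mrange (mpow (A ** W) k))"

definition wcoreEP :: "'n::finite cmat \<Rightarrow> 'n cmat \<Rightarrow> 'n cmat" where
  "wcoreEP A W = (THE X. is_wcoreEP A W X)"

definition is_wcore :: "'n::finite cmat \<Rightarrow> 'n cmat \<Rightarrow> 'n cmat \<Rightarrow> bool" where
  "is_wcore B W X \<longleftrightarrow> B ** ((W ** X) ** (W ** X)) = X
     \<and> ctrans (W ** B ** W ** X) = W ** B ** W ** X
     \<and> X ** W ** ((B ** W) ** (B ** W)) = B ** W"

definition wcore :: "'n::finite cmat \<Rightarrow> 'n cmat \<Rightarrow> 'n cmat" where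
  "wcore B W = (THE X. is_wcore B W X)"

end

theory Submission
  imports Defs
begin

text \<open>
  Everything is expressed through the Drazin inverse \<open>G\<close> of \<open>AW\<close>. The \<open>W\<close>-weighted
  Drazin inverse of \<open>A\<close> is \<open>G\<^sup>2A\<close>, so \<open>A\<^sup>D\<^sup>,\<^sup>W W = G\<close>. For \<open>k\<close> at least the indices
  of \<open>AW\<close> and \<open>WA\<close> the ranges of \<open>(WA)\<^sup>k\<close> and \<open>WG\<close> coincide, so the orthogonal
  projector \<open>P = (WA)\<^sup>k((WA)\<^sup>k)\<^sup>\<dagger>\<close> onto \<open>R((WA)\<^sup>k)\<close> satisfies \<open>P(WG) = WG\<close> and
  \<open>WGAP = P\<close>. From these two identities one reads off \<open>A\<^sup>c\<^sup>E\<^sup>P\<^sup>,\<^sup>W = G\<^sup>2AP\<close>, and that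
  \<open>AWGAP\<close> is the only \<open>W\<close>-weighted core inverse of \<open>G\<^sup>2A\<close>; since \<open>G\<^sup>2AWG = G\<^sup>2\<close>,
  multiplying the latter by \<open>(A\<^sup>D\<^sup>,\<^sup>W W)\<^sup>2 = G\<^sup>2\<close> gives the former.

  The Drazin inverse exists because powers stabilise: \<open>M\<^sup>k = M\<^sup>k\<^sup>+\<^sup>1Y = ZM\<^sup>k\<^sup>+\<^sup>1\<close> for
  large \<open>k\<close>, and then \<open>M\<^sup>kY\<^sup>k\<^sup>+\<^sup>1\<close> is a Drazin inverse. The Moore-Penrose inverse of
  \<open>K\<close> is \<open>(K\<^sup>*K)\<^sup>DK\<^sup>*\<close>: the Drazin inverse of a hermitian matrix is a group
  inverse, as hermitian nilpotent matrices vanish.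
\<close>

section \<open>Matrix powers and the conjugate transpose\<close>

lemma matrix_diff_ldistrib: "(A::'a::ring_1^'n^'m) ** (B - C) = A ** B - A ** C"
  by (simp add: matrix_matrix_mult_def vec_eq_iff sum_subtractf right_diff_distrib)

lemma matrix_diff_rdistrib: "((A::'a::ring_1^'n^'m) - B) ** C = A ** C - B ** C"
  by (simp add: matrix_matrix_mult_def vec_eq_iff sum_subtractf left_diff_distrib)

lemma mpow_Suc_right: "mpow M (Suc k) = mpow M k ** M"
  by (induction k) (simp_all add: matrix_mul_assoc)

lemma mpow_add: "mpow M (a + b) = mpow M a ** mpow M b"
  by (induction a) (simp_all add: matrix_mul_assoc)

lemma mpow_commute: "A ** M = M ** A \<Longrightarrow> A ** mpow M k = mpow M k ** A"
  by (induction k) (simp_all, metis matrix_mul_assoc)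

lemma mpow_mult_commute: "M ** mpow M k = mpow M k ** M"
  by (rule mpow_commute) (rule refl)

lemma mpow_push_through: "W ** mpow (A ** W) k = mpow (W ** A) k ** W"
  by (induction k) (simp_all, metis matrix_mul_assoc)

lemma transpose_mpow: "transpose (mpow M k) = mpow (transpose M) k"
proof (induction k)
  case (Suc k)
  have "transpose (mpow M (Suc k)) = transpose (mpow M k) ** transpose M"
    by (simp only: mpow.simps(2) matrix_transpose_mul)
  also have "\<dots> = mpow (transpose M) (Suc k)"
    by (simp only: Suc.IH mpow_Suc_right)
  finally show ?case .
qed simp

lemma ctrans_mult: "ctrans (A ** B) = ctrans B ** ctrans A"
  by (simp add: ctrans_def matrix_matrix_mult_def vec_eq_iff mult.commute)

lemma ctrans_ctrans [simp]: "ctrans (ctrans A) = A"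
  by (simp add: ctrans_def vec_eq_iff)

lemma ctrans_diff: "ctrans (A - B) = ctrans A - ctrans B"
  by (simp add: ctrans_def vec_eq_iff)

lemma ctrans_mpow: "ctrans (mpow M k) = mpow (ctrans M) k"
proof (induction k)
  case 0
  show ?case
    by (simp add: ctrans_def vec_eq_iff mat_def)
next
  case (Suc k)
  have "ctrans (mpow M (Suc k)) = ctrans (mpow M k) ** ctrans M"
    by (simp only: mpow.simps(2) ctrans_mult)
  also have "\<dots> = mpow (ctrans M) (Suc k)"
    by (simp only: Suc.IH mpow_Suc_right)
  finally show ?case .
qed

lemma ctrans_mult_self_eq_0:
  assumes "ctrans A ** A = 0"
  shows "A = 0"
proof -
  have "A $ i $ j = 0" for i j
  proof -
    have "(ctrans A ** A) $ j $ j = (\<Sum>l\<in>UNIV. cnj (A $ l $ j) * A $ l $ j)"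
      by (simp add: ctrans_def matrix_matrix_mult_def)
    also have "\<dots> = (\<Sum>l\<in>UNIV. of_real ((norm (A $ l $ j))\<^sup>2))"
      by (simp only: complex_norm_square mult.commute)
    also have "\<dots> = of_real (\<Sum>l\<in>UNIV. (norm (A $ l $ j))\<^sup>2)"
      by simp
    finally have "of_real (\<Sum>l\<in>UNIV. (norm (A $ l $ j))\<^sup>2) = (0::complex)"
      using assms by simp
    then have "(\<Sum>l\<in>UNIV. (norm (A $ l $ j))\<^sup>2) = 0"
      by (simp only: of_real_eq_0_iff)
    then show ?thesis
      by (subst (asm) sum_nonneg_eq_0_iff) auto
  qed
  then show ?thesis
    by (simp add: vec_eq_iff)
qed

lemma hermitian_nilpotent_eq_0:
  assumes herm: "ctrans T = T" and "mpow T n = 0"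
  shows "T = 0"
proof -
  have "mpow T (Suc j) = 0" if "mpow T (Suc (Suc j)) = 0" for j
  proof (rule ctrans_mult_self_eq_0)
    have "ctrans (mpow T (Suc j)) ** mpow T (Suc j) = mpow T j ** mpow T (Suc (Suc j))"
      by (simp only: ctrans_mpow herm mpow_add[symmetric] add_Suc_right add_Suc)
    then show "ctrans (mpow T (Suc j)) ** mpow T (Suc j) = 0"
      using that by simp
  qed
  moreover have "mpow T (Suc n) = 0"
    using \<open>mpow T n = 0\<close> by simp
  ultimately show ?thesis
    by (induction n) auto
qed

section \<open>Ranges and ranks\<close>

lemma matrix_vector_mult_axis: "(P *v axis j 1) $ i = P $ i $ j"
  for P :: "'a::semiring_1^'n^'m"
  by (simp add: matrix_vector_mult_def axis_def if_distrib if_distribR cong: if_cong)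

lemma span_columns_eq_range: "vec.span (columns (Q::'a::field^'n^'m)) = range ((*v) Q)"
proof
  show "vec.span (columns Q) \<subseteq> range ((*v) Q)"
  proof (rule vec.span_minimal)
    show "columns Q \<subseteq> range ((*v) Q)"
    proof
      fix x
      assume "x \<in> columns Q"
      then obtain j where "x = column j Q"
        by (auto simp: columns_def)
      then have "x = Q *v axis j 1"
        by (simp add: vec_eq_iff matrix_vector_mult_axis column_def)
      then show "x \<in> range ((*v) Q)"
        by blast
    qed
    show "vec.subspace (range ((*v) Q))"
      using vec.subspace_image[OF vec.subspace_UNIV, of Q] by simp
  qed
  show "range ((*v) Q) \<subseteq> vec.span (columns Q)"
    using matrix_vector_mult_in_columnspace_gen by blast
qed

lemma range_subset_imp_factor:
  fixes P :: "'a::field^'n^'m" and Q :: "'a^'p^'m"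
  assumes "range ((*v) P) \<subseteq> range ((*v) Q)"
  shows "\<exists>Y. P = Q ** Y"
proof -
  have "\<forall>j. \<exists>y. P *v axis j 1 = Q *v y"
    using assms by blast
  then obtain y where y: "\<And>j. P *v axis j 1 = Q *v y j"
    by metis
  have "P $ i $ j = (Q ** (\<chi> l j. y j $ l)) $ i $ j" for i j
  proof -
    have "P $ i $ j = (Q *v y j) $ i"
      by (metis y matrix_vector_mult_axis)
    also have "\<dots> = (Q ** (\<chi> l j. y j $ l)) $ i $ j"
      by (simp add: matrix_vector_mult_def matrix_matrix_mult_def)
    finally show ?thesis .
  qed
  then have "P = Q ** (\<chi> l j. y j $ l)"
    by (simp add: vec_eq_iff)
  then show ?thesis ..
qed

lemma range_matrix_mult_subset: "range ((*v) (P ** Q)) \<subseteq> range ((*v) P)"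
  by (auto simp flip: matrix_vector_mul_assoc)

lemma rank_eq_dim_range_transpose: "rank A = vec.dim (range ((*v) (transpose A)))"
  by (metis span_columns_eq_range columns_transpose row_rank_def_gen vec.dim_span)

lemma rank_mult_le_right: "rank (A ** B) \<le> rank (B::'a::field^'n^'m)"
  unfolding rank_eq_dim_range_transpose matrix_transpose_mul
  by (rule vec.dim_subset[OF range_matrix_mult_subset])

lemma rank_mult_eq_imp_factor:
  fixes A B :: "'a::field^'n^'n"
  assumes "rank (A ** B) = rank B"
  shows "\<exists>Z. B = Z ** (A ** B)"
proof -
  have subspace: "vec.subspace (range ((*v) T))" for T :: "'a^'n^'n"
    using vec.subspace_image[OF vec.subspace_UNIV, of T] by simp
  have "range ((*v) (transpose B ** transpose A)) = range ((*v) (transpose B))"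
    by (rule vec.subspace_dim_equal[OF subspace subspace range_matrix_mult_subset])
      (use assms in \<open>simp add: rank_eq_dim_range_transpose matrix_transpose_mul\<close>)
  then obtain Y where "transpose B = (transpose B ** transpose A) ** Y"
    using range_subset_imp_factor[of "transpose B" "transpose B ** transpose A"] by auto
  then have "transpose (transpose B) = transpose ((transpose B ** transpose A) ** Y)"
    by simp
  then have "B = transpose Y ** (A ** B)"
    by (simp add: matrix_transpose_mul)
  then show ?thesis ..
qed

lemma mrange_eq_range: "mrange M = range ((*v) M)"
  by (auto simp: mrange_def)

lemma mrange_mult_subset: "mrange (R ** T) \<subseteq> mrange R"
  unfolding mrange_eq_range by (rule range_matrix_mult_subset)

lemma mrange_subset_imp_fixed:
  assumes "mrange X \<subseteq> mrange R" and "E ** R = R"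
  shows "E ** X = X"
proof -
  obtain Y where "X = R ** Y"
    using assms(1) range_subset_imp_factor unfolding mrange_eq_range by blast
  then show ?thesis
    using assms(2) by (simp add: matrix_mul_assoc)
qed

section \<open>The Drazin inverse\<close>

text \<open>
  The exponent \<open>m\<close> is only a witness: \<open>G\<close> does not depend on it (\<open>drazin_unique\<close>), and
  every \<open>m \<ge> ind M\<close> will do (\<open>mpow_Suc_mult_drazin\<close>).
\<close>

definition is_drazin :: "'n::finite cmat \<Rightarrow> 'n cmat \<Rightarrow> nat \<Rightarrow> bool" where
  "is_drazin M G m \<longleftrightarrow> M ** G = G ** M \<and> G ** M ** G = G \<and> mpow M (Suc m) ** G = mpow M m"

lemma commuting_outer_inverse_mpow_left:
  assumes c: "M ** G = G ** M" and g: "G ** M ** G = G"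
  shows "mpow G (Suc j) ** mpow M j = G"
proof (induction j)
  case (Suc j)
  have "mpow G (Suc (Suc j)) ** mpow M (Suc j) = G ** (mpow G (Suc j) ** mpow M j) ** M"
    by (metis mpow.simps(2) mpow_Suc_right matrix_mul_assoc)
  also have "\<dots> = G ** G ** M"
    using Suc.IH by simp
  also have "\<dots> = G"
    by (metis c g matrix_mul_assoc)
  finally show ?case .
qed simp

lemma commuting_outer_inverse_mpow_right:
  assumes c: "M ** G = G ** M" and g: "G ** M ** G = G"
  shows "mpow M j ** mpow G (Suc j) = G"
proof (induction j)
  case (Suc j)
  have "mpow M (Suc j) ** mpow G (Suc (Suc j)) = M ** (mpow M j ** mpow G (Suc j)) ** G"
    by (metis mpow.simps(2) mpow_Suc_right matrix_mul_assoc)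
  also have "\<dots> = M ** G ** G"
    using Suc.IH by simp
  also have "\<dots> = G"
    by (metis c g matrix_mul_assoc)
  finally show ?case .
qed simp

lemma commuting_outer_inverse_mpow_diff:
  assumes c: "M ** G = G ** M" and g: "G ** M ** G = G"
  shows "mpow (M - M ** G ** M) (Suc j) = mpow M (Suc j) - mpow M (Suc (Suc j)) ** G"
proof (induction j)
  case 0
  have "M ** G ** M = M ** M ** G"
    by (metis c matrix_mul_assoc)
  then show ?case by simp
next
  case (Suc j)
  let ?P = "mpow M (Suc j)" and ?Q = "mpow M (Suc (Suc j)) ** G"
  have cG: "G ** mpow M i = mpow M i ** G" for i
    using mpow_commute c by metis
  have "M ** G ** M ** ?P = M ** (G ** mpow M (Suc (Suc j)))"
    by (simp only: mpow.simps(2) matrix_mul_assoc)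
  then have GP: "M ** G ** M ** ?P = M ** ?Q"
    by (simp only: cG)
  have "M ** G ** M ** ?Q = M ** (G ** (M ** mpow M (Suc (Suc j)))) ** G"
    by (simp only: matrix_mul_assoc)
  also have "\<dots> = M ** (G ** mpow M (Suc (Suc j))) ** M ** G"
    by (simp only: mpow_mult_commute matrix_mul_assoc)
  also have "\<dots> = M ** (mpow M (Suc (Suc j)) ** G) ** M ** G"
    by (simp only: cG)
  also have "\<dots> = M ** mpow M (Suc (Suc j)) ** (G ** M ** G)"
    by (simp only: matrix_mul_assoc)
  finally have GQ: "M ** G ** M ** ?Q = M ** ?Q"
    by (simp only: g matrix_mul_assoc)
  have "mpow (M - M ** G ** M) (Suc (Suc j)) = (M - M ** G ** M) ** (?P - ?Q)"
    using Suc.IH by simp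
  also have "\<dots> = M ** ?P - M ** ?Q"
    by (simp only: matrix_diff_ldistrib matrix_diff_rdistrib GP GQ) simp
  finally show ?case
    by (simp add: matrix_mul_assoc)
qed

lemma drazin_iff_nilpotent:
  assumes c: "M ** G = G ** M" and g: "G ** M ** G = G"
  shows "(\<exists>m. is_drazin M G m) \<longleftrightarrow> nilpotent_mat (M - M ** G ** M)"
proof
  assume "\<exists>m. is_drazin M G m"
  then obtain m where "mpow M (Suc m) ** G = mpow M m"
    by (auto simp: is_drazin_def)
  then have "mpow M (Suc (Suc m)) ** G = mpow M (Suc m)"
    by (simp flip: matrix_mul_assoc)
  then have "mpow (M - M ** G ** M) (Suc m) = 0"
    using commuting_outer_inverse_mpow_diff[OF c g, of m] by simp
  then show "nilpotent_mat (M - M ** G ** M)"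
    unfolding nilpotent_mat_def by blast
next
  assume "nilpotent_mat (M - M ** G ** M)"
  then obtain n where "mpow (M - M ** G ** M) n = 0"
    by (auto simp: nilpotent_mat_def)
  then have "mpow (M - M ** G ** M) (Suc n) = 0"
    by simp
  then have "mpow M (Suc (Suc n)) ** G = mpow M (Suc n)"
    using commuting_outer_inverse_mpow_diff[OF c g, of n] by simp
  then show "\<exists>m. is_drazin M G m"
    using c g unfolding is_drazin_def by blast
qed

lemma is_drazin_mono:
  assumes "is_drazin M G m" and "m \<le> m'"
  shows "is_drazin M G m'"
  using assms(2)
proof (induction m' rule: dec_induct)
  case (step n)
  then have "mpow M (Suc n) ** G = mpow M n"
    by (simp add: is_drazin_def)
  then have "mpow M (Suc (Suc n)) ** G = mpow M (Suc n)"
    by (simp flip: matrix_mul_assoc)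
  with step show ?case
    by (simp add: is_drazin_def)
qed (use assms(1) in simp)

lemma drazin_unique:
  assumes "is_drazin M G1 m1" and "is_drazin M G2 m2"
  shows "G1 = G2"
proof -
  define m where "m = max m1 m2"
  have "is_drazin M G1 m" and "is_drazin M G2 m"
    using assms is_drazin_mono unfolding m_def by (metis max.cobounded1 max.cobounded2)+
  then have c1: "M ** G1 = G1 ** M" and g1: "G1 ** M ** G1 = G1"
    and p1: "mpow M (Suc m) ** G1 = mpow M m"
    and c2: "M ** G2 = G2 ** M" and g2: "G2 ** M ** G2 = G2"
    and p2: "mpow M m ** M ** G2 = mpow M m"
    by (simp_all only: is_drazin_def mpow_Suc_right)
  note left = commuting_outer_inverse_mpow_left[OF c1 g1]
    and right = commuting_outer_inverse_mpow_right[OF c2 g2]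
  have "G1 = mpow G1 (Suc m) ** mpow M m"
    by (rule sym[OF left])
  also have "\<dots> = mpow G1 (Suc m) ** (mpow M m ** M ** G2)"
    by (simp only: p2)
  also have "\<dots> = (mpow G1 (Suc m) ** mpow M m) ** M ** G2"
    by (simp only: matrix_mul_assoc)
  also have "\<dots> = G1 ** M ** G2"
    by (simp only: left)
  finally have G1: "G1 = G1 ** M ** G2" .
  have "G2 = mpow M m ** mpow G2 (Suc m)"
    by (rule sym[OF right])
  also have "\<dots> = (G1 ** mpow M (Suc m)) ** mpow G2 (Suc m)"
    by (simp only: mpow_commute[OF c1[symmetric]] p1)
  also have "\<dots> = G1 ** M ** (mpow M m ** mpow G2 (Suc m))"
    by (simp only: mpow.simps(2) matrix_mul_assoc)
  also have "\<dots> = G1 ** M ** G2"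
    by (simp only: right)
  finally have G2: "G2 = G1 ** M ** G2" .
  from G1 G2[symmetric] show ?thesis
    by (rule trans)
qed

lemma decreasing_nat_seq_stabilizes:
  fixes f :: "nat \<Rightarrow> nat"
  assumes "\<And>j. f (Suc j) \<le> f j"
  shows "\<exists>j. f (Suc j) = f j"
proof (rule ccontr)
  assume "\<nexists>j. f (Suc j) = f j"
  then have lt: "f (Suc j) < f j" for j
    using assms le_neq_implies_less by blast
  have "f j + j \<le> f 0" for j
  proof (induction j)
    case (Suc j)
    then show ?case
      using lt[of j] by simp
  qed simp
  from this[of "Suc (f 0)"] show False
    by simp
qed

lemma rank_mpow_stabilizes: "\<exists>k. rank (mpow M k) = rank (mpow M (Suc k))"
  using decreasing_nat_seq_stabilizes[of "\<lambda>k. rank (mpow M k)"] rank_mult_le_right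
  by (metis mpow.simps(2))

lemma mpow_left_factor_iter:
  assumes "mpow M k = Z ** mpow M (Suc k)"
  shows "mpow M k = mpow Z j ** mpow M (k + j)"
proof (induction j)
  case (Suc j)
  have "mpow Z (Suc j) ** mpow M (k + Suc j) = mpow Z j ** (Z ** mpow M (Suc k)) ** mpow M j"
    by (metis mpow_add mpow_Suc_right matrix_mul_assoc add_Suc_right add_Suc)
  also have "\<dots> = mpow Z j ** mpow M (k + j)"
    using assms by (simp add: mpow_add matrix_mul_assoc)
  finally show ?case
    using Suc.IH by simp
qed simp

lemma mpow_right_factor_iter:
  assumes "mpow M k = mpow M (Suc k) ** Y"
  shows "mpow M k = mpow M (k + j) ** mpow Y j"
proof (induction j)
  case (Suc j)
  have "mpow M (k + Suc j) ** mpow Y (Suc j) = mpow M j ** (mpow M (Suc k) ** Y) ** mpow Y j"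
    by (metis mpow_add mpow.simps(2) matrix_mul_assoc add.commute add_Suc_right)
  also have "\<dots> = mpow M (k + j) ** mpow Y j"
    using assms by (simp add: mpow_add add.commute)
  finally show ?case
    using Suc.IH by simp
qed simp

lemma ind_mpow_left_factor:
  assumes "ind M \<le> k"
  shows "\<exists>Z. mpow M k = Z ** mpow M (Suc k)"
proof -
  have "rank (mpow M (ind M)) = rank (mpow M (Suc (ind M)))"
    unfolding ind_def by (rule LeastI_ex[OF rank_mpow_stabilizes])
  then have "rank (M ** mpow M (ind M)) = rank (mpow M (ind M))"
    by simp
  then have "\<exists>Z. mpow M (ind M) = Z ** (M ** mpow M (ind M))"
    by (rule rank_mult_eq_imp_factor)
  then obtain Z where Z: "mpow M (ind M) = Z ** mpow M (Suc (ind M))"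
    unfolding mpow.simps(2) by blast
  obtain d where k: "k = ind M + d"
    using assms le_Suc_ex by blast
  have "mpow M k = Z ** (mpow M (Suc (ind M)) ** mpow M d)"
    by (simp only: k mpow_add Z matrix_mul_assoc)
  also have "\<dots> = Z ** mpow M (Suc k)"
    by (simp only: k add_Suc[symmetric] mpow_add)
  finally show ?thesis ..
qed

lemma ind_transpose_mpow_right_factor:
  assumes "ind (transpose M) \<le> k"
  shows "\<exists>Y. mpow M k = mpow M (Suc k) ** Y"
proof -
  obtain Z where Z: "mpow (transpose M) k = Z ** mpow (transpose M) (Suc k)"
    using ind_mpow_left_factor[OF assms] by blast
  have "mpow M k = transpose (mpow (transpose M) k)"
    by (simp add: transpose_mpow)
  also have "\<dots> = mpow M (Suc k) ** transpose Z"
    by (simp only: Z matrix_transpose_mul transpose_mpow transpose_transpose)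
  finally show ?thesis ..
qed

lemma drazin_of_factors:
  assumes Y: "mpow M k = mpow M (Suc k) ** Y" and Z: "mpow M k = Z ** mpow M (Suc k)"
  shows "is_drazin M (mpow M k ** mpow Y (Suc k)) k"
proof -
  define G where "G = mpow M k ** mpow Y (Suc k)"
  note Y_iter = mpow_right_factor_iter[OF Y] and Z_iter = mpow_left_factor_iter[OF Z]
  have M2k: "mpow M (Suc k) ** mpow M k = mpow M (k + Suc k)"
    by (simp only: mpow_add[symmetric] add.commute)
  have "mpow Z (Suc k) ** mpow M k = (mpow Z (Suc k) ** mpow M (k + Suc k)) ** mpow Y (Suc k)"
    using Y_iter[of "Suc k"] by (simp only: matrix_mul_assoc)
  also have "\<dots> = G"
    using Z_iter[of "Suc k"] by (simp only: G_def)
  finally have G_Z: "G = mpow Z (Suc k) ** mpow M k"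
    by (rule sym)
  have GM: "G ** M = mpow Z (Suc k) ** mpow M (Suc k)"
    by (simp only: G_Z mpow_Suc_right matrix_mul_assoc)
  have "M ** G = (mpow M (Suc k) ** Y) ** mpow Y k"
    by (simp add: G_def matrix_mul_assoc)
  also have "\<dots> = (mpow Z (Suc k) ** mpow M (k + Suc k)) ** mpow Y k"
    by (simp only: Z_iter[of "Suc k", symmetric] Y[symmetric])
  also have "\<dots> = mpow Z (Suc k) ** M ** (mpow M (k + k) ** mpow Y k)"
    by (simp add: matrix_mul_assoc)
  also have "\<dots> = G ** M"
    by (simp only: Y_iter[of k, symmetric] GM mpow.simps(2) matrix_mul_assoc)
  finally have comm: "M ** G = G ** M" .
  have "G ** M ** G = mpow Z (Suc k) ** (mpow M (Suc k) ** mpow M k) ** mpow Y (Suc k)"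
    by (simp only: GM) (simp only: G_def matrix_mul_assoc)
  also have "\<dots> = (mpow Z (Suc k) ** mpow M (k + Suc k)) ** mpow Y (Suc k)"
    by (simp only: M2k)
  also have "\<dots> = G"
    by (simp only: Z_iter[of "Suc k", symmetric] G_def)
  finally have outer: "G ** M ** G = G" .
  have "mpow M (Suc k) ** G = mpow M (k + Suc k) ** mpow Y (Suc k)"
    by (simp only: G_def M2k[symmetric] matrix_mul_assoc)
  also have "\<dots> = mpow M k"
    by (simp only: Y_iter[of "Suc k", symmetric])
  finally show ?thesis
    using comm outer unfolding is_drazin_def G_def[symmetric] by blast
qed

lemma drazin_exists: "\<exists>G m. is_drazin M G m"
proof -
  define k where "k = max (ind M) (ind (transpose M))"
  obtain Z where "mpow M k = Z ** mpow M (Suc k)"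
    using ind_mpow_left_factor[of M k] by (auto simp: k_def)
  moreover obtain Y where "mpow M k = mpow M (Suc k) ** Y"
    using ind_transpose_mpow_right_factor[of M k] by (auto simp: k_def)
  ultimately show ?thesis
    using drazin_of_factors by blast
qed

lemma mpow_Suc_mult_drazin:
  assumes d: "is_drazin M G m" and "ind M \<le> k"
  shows "mpow M (Suc k) ** G = mpow M k"
proof -
  obtain Z where Z: "mpow M k = Z ** mpow M (Suc k)"
    using ind_mpow_left_factor[OF \<open>ind M \<le> k\<close>] by blast
  have "mpow M (k + m) = mpow M k ** (mpow M (Suc m) ** G)"
    using d by (simp add: is_drazin_def mpow_add)
  also have "\<dots> = mpow M (k + m) ** M ** G"
    by (simp only: mpow_add mpow_Suc_right matrix_mul_assoc)
  finally have KM: "mpow M (k + m) = mpow M (k + m) ** M ** G" .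
  note iter = mpow_left_factor_iter[OF Z, of m]
  have "mpow M k = mpow Z m ** (mpow M (k + m) ** M ** G)"
    by (simp only: KM[symmetric] iter)
  also have "\<dots> = mpow M (Suc k) ** G"
    by (simp only: matrix_mul_assoc iter[symmetric] mpow_Suc_right)
  finally show ?thesis
    by (rule sym)
qed

lemma drazin_mult_mpow_Suc:
  assumes d: "is_drazin M G m" and "ind M \<le> k"
  shows "G ** mpow M (Suc k) = mpow M k"
proof -
  have "G ** M = M ** G"
    using d by (simp add: is_drazin_def)
  then show ?thesis
    using mpow_Suc_mult_drazin[OF assms] by (simp only: mpow_commute)
qed

lemma drazin_sq_mult:
  assumes "is_drazin M G m"
  shows "G ** G ** M = G"
proof -
  have c: "M ** G = G ** M" and g: "G ** M ** G = G"
    using assms by (simp_all add: is_drazin_def)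
  have "G ** G ** M = G ** (M ** G)"
    by (simp only: c matrix_mul_assoc)
  also have "\<dots> = G"
    by (simp only: g matrix_mul_assoc)
  finally show ?thesis .
qed

lemma mult_drazin_sq:
  assumes "is_drazin M G m"
  shows "M ** G ** G = G"
  using assms by (simp add: is_drazin_def)

section \<open>The Moore-Penrose inverse\<close>

definition is_moore_penrose :: "'n::finite cmat \<Rightarrow> 'n cmat \<Rightarrow> bool" where
  "is_moore_penrose K X \<longleftrightarrow> K ** X ** K = K \<and> X ** K ** X = X
     \<and> ctrans (K ** X) = K ** X \<and> ctrans (X ** K) = X ** K"

lemma moore_penrose_left_eq:
  assumes "is_moore_penrose K X" and "is_moore_penrose K Y"
  shows "X = X ** K ** Y"
proof -
  from assms have x2: "X ** K ** X = X" and x3: "ctrans (K ** X) = K ** X"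
    and y1: "K ** Y ** K = K" and y3: "ctrans (K ** Y) = K ** Y"
    by (simp_all add: is_moore_penrose_def)
  have "ctrans K = ctrans (K ** Y ** K)"
    by (simp only: y1)
  also have "\<dots> = ctrans K ** ctrans (K ** Y)"
    by (rule ctrans_mult)
  also have "\<dots> = ctrans K ** K ** Y"
    by (simp only: y3 matrix_mul_assoc)
  finally have KY: "ctrans K = ctrans K ** K ** Y" .
  have "X = X ** ctrans (K ** X)"
    using x2 x3 by (simp add: matrix_mul_assoc)
  also have "\<dots> = X ** ctrans X ** ctrans K"
    by (simp only: ctrans_mult matrix_mul_assoc)
  also have "\<dots> = X ** ctrans (K ** X) ** K ** Y"
    by (subst KY) (simp add: ctrans_mult matrix_mul_assoc)
  also have "\<dots> = X ** K ** Y"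
    using x2 x3 by (simp add: matrix_mul_assoc)
  finally show ?thesis .
qed

lemma moore_penrose_right_eq:
  assumes "is_moore_penrose K X" and "is_moore_penrose K Y"
  shows "Y = X ** K ** Y"
proof -
  from assms have x1: "K ** X ** K = K" and x4: "ctrans (X ** K) = X ** K"
    and y2: "Y ** K ** Y = Y" and y4: "ctrans (Y ** K) = Y ** K"
    by (simp_all add: is_moore_penrose_def)
  have "ctrans K = ctrans (K ** (X ** K))"
    using x1 by (simp add: matrix_mul_assoc)
  also have "\<dots> = ctrans (X ** K) ** ctrans K"
    by (rule ctrans_mult)
  also have "\<dots> = X ** K ** ctrans K"
    by (simp only: x4)
  finally have XK: "ctrans K = X ** K ** ctrans K" .
  have "Y = ctrans (Y ** K) ** Y"
    using y2 y4 by simp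
  also have "\<dots> = ctrans K ** ctrans Y ** Y"
    by (simp only: ctrans_mult)
  also have "\<dots> = X ** K ** ctrans (Y ** K) ** Y"
    by (subst XK) (simp add: ctrans_mult matrix_mul_assoc)
  also have "\<dots> = X ** K ** (Y ** K ** Y)"
    using y4 by (simp add: matrix_mul_assoc)
  also have "\<dots> = X ** K ** Y"
    by (simp only: y2)
  finally show ?thesis .
qed

lemma moore_penrose_unique:
  assumes "is_moore_penrose K X" and "is_moore_penrose K Y"
  shows "X = Y"
  using moore_penrose_left_eq[OF assms] moore_penrose_right_eq[OF assms] by (rule trans_sym)

lemma hermitian_mutual_absorb_eq:
  assumes "ctrans P = P" and "ctrans Q = Q" and "P ** Q = Q" and "Q ** P = P"
  shows "Q = P"
proof -
  have "Q = ctrans (P ** Q)"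
    using assms(2,3) by simp
  also have "\<dots> = Q ** P"
    using assms(1,2) by (simp add: ctrans_mult)
  also have "\<dots> = P"
    by (rule assms(4))
  finally show ?thesis .
qed

lemma drazin_hermitian:
  assumes herm: "ctrans F = F" and d: "is_drazin F G m"
  shows "ctrans G = G"
proof -
  have c: "F ** G = G ** F" and g: "G ** F ** G = G" and p: "mpow F (Suc m) ** G = mpow F m"
    using d by (simp_all add: is_drazin_def)
  have "is_drazin F (ctrans G) m"
    unfolding is_drazin_def
  proof (intro conjI)
    have "F ** ctrans G = ctrans (F ** G)"
      by (simp only: c ctrans_mult herm)
    then show "F ** ctrans G = ctrans G ** F"
      by (simp only: ctrans_mult herm)
    have "ctrans G ** F ** ctrans G = ctrans (G ** F ** G)"
      by (simp only: ctrans_mult herm matrix_mul_assoc)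
    then show "ctrans G ** F ** ctrans G = ctrans G"
      by (simp only: g)
    have "mpow F (Suc m) ** ctrans G = ctrans (G ** mpow F (Suc m))"
      by (simp only: ctrans_mult ctrans_mpow herm)
    also have "\<dots> = ctrans (mpow F m)"
      by (simp only: mpow_commute[OF c[symmetric]] p)
    finally show "mpow F (Suc m) ** ctrans G = mpow F m"
      by (simp only: ctrans_mpow herm)
  qed
  then show ?thesis
    using d by (rule drazin_unique)
qed

lemma hermitian_drazin_inner:
  assumes herm: "ctrans F = F" and d: "is_drazin F G m"
  shows "F ** G ** F = F"
proof -
  have c: "F ** G = G ** F" and g: "G ** F ** G = G"
    using d by (simp_all add: is_drazin_def)
  have "nilpotent_mat (F - F ** G ** F)"
    using drazin_iff_nilpotent[OF c g] d by blast
  moreover have "ctrans (F - F ** G ** F) = F - F ** G ** F"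
    using drazin_hermitian[OF herm d] herm
    by (simp add: ctrans_diff ctrans_mult matrix_mul_assoc)
  ultimately have "F - F ** G ** F = 0"
    using hermitian_nilpotent_eq_0 unfolding nilpotent_mat_def by blast
  then show ?thesis
    by (metis right_minus_eq)
qed

lemma drazin_ctrans_mult_self_absorb:
  assumes d: "is_drazin (ctrans K ** K) G m"
  shows "K ** G ** (ctrans K ** K) = K"
proof -
  define F where "F = ctrans K ** K"
  define U where "U = mat 1 - G ** F"
  have herm: "ctrans F = F"
    by (simp add: F_def ctrans_mult)
  have "F ** U = F - F ** G ** F"
    by (simp add: U_def matrix_diff_ldistrib matrix_mul_assoc)
  also have "\<dots> = 0"
    using hermitian_drazin_inner[OF herm d[folded F_def]] by simp
  finally have "F ** U = 0" .
  moreover have "ctrans (K ** U) ** (K ** U) = ctrans U ** (F ** U)"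
    by (simp add: ctrans_mult F_def matrix_mul_assoc)
  ultimately have "ctrans (K ** U) ** (K ** U) = 0"
    by simp
  then have "K ** U = 0"
    by (rule ctrans_mult_self_eq_0)
  moreover have "K ** U = K - K ** G ** F"
    by (simp add: U_def matrix_diff_ldistrib matrix_mul_assoc)
  ultimately show ?thesis
    unfolding F_def by (metis right_minus_eq)
qed

lemma moore_penrose_exists: "\<exists>X. is_moore_penrose K X"
proof -
  define F where "F = ctrans K ** K"
  have herm: "ctrans F = F"
    by (simp add: F_def ctrans_mult)
  obtain G m where d: "is_drazin F G m"
    using drazin_exists by blast
  have c: "F ** G = G ** F" and g: "G ** F ** G = G"
    using d by (simp_all add: is_drazin_def)
  have hG: "ctrans G = G"
    using herm d by (rule drazin_hermitian)
  have KGF: "K ** G ** F = K"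
    using drazin_ctrans_mult_self_absorb d unfolding F_def by blast
  have "is_moore_penrose K (G ** ctrans K)"
    unfolding is_moore_penrose_def
  proof (intro conjI)
    show "K ** (G ** ctrans K) ** K = K"
      using KGF by (simp add: F_def matrix_mul_assoc)
    show "G ** ctrans K ** K ** (G ** ctrans K) = G ** ctrans K"
      using g by (simp add: F_def matrix_mul_assoc)
    show "ctrans (K ** (G ** ctrans K)) = K ** (G ** ctrans K)"
      using hG by (simp add: ctrans_mult matrix_mul_assoc)
    show "ctrans (G ** ctrans K ** K) = G ** ctrans K ** K"
      using hG herm c by (simp add: F_def ctrans_mult matrix_mul_assoc)
  qed
  then show ?thesis ..
qed

lemma mp_inv_is_moore_penrose: "is_moore_penrose K (mp_inv K)"
proof -
  have eq: "mp_inv K = (THE X. is_moore_penrose K X)"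
    by (simp add: mp_inv_def is_moore_penrose_def)
  have "\<exists>!X. is_moore_penrose K X"
    using moore_penrose_exists moore_penrose_unique by blast
  then show ?thesis
    unfolding eq by (rule theI')
qed

section \<open>Weighted inverses through the Drazin inverse of AW\<close>

lemma is_wdrazin_imp_eq:
  assumes d: "is_drazin (A ** W) G m" and "is_wdrazin A W X"
  shows "X = G ** G ** A"
proof -
  from \<open>is_wdrazin A W X\<close> have comm: "A ** W ** X = X ** W ** A"
    and outer: "X ** W ** A ** W ** X = X"
    and nil: "nilpotent_mat ((A - A ** W ** X ** W ** A) ** W)"
    unfolding is_wdrazin_def by blast+
  have c: "A ** W ** (X ** W) = X ** W ** (A ** W)"
    using comm by (simp add: matrix_mul_assoc)
  have g: "X ** W ** (A ** W) ** (X ** W) = X ** W"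
    using outer by (simp add: matrix_mul_assoc)
  have "nilpotent_mat (A ** W - A ** W ** (X ** W) ** (A ** W))"
    using nil by (simp add: matrix_diff_rdistrib matrix_mul_assoc)
  then obtain m' where "is_drazin (A ** W) (X ** W) m'"
    using drazin_iff_nilpotent[OF c g] by blast
  then have XW: "X ** W = G"
    using d by (rule drazin_unique)
  have "X = X ** W ** (A ** W ** X)"
    using outer by (simp add: matrix_mul_assoc)
  also have "\<dots> = (X ** W) ** (X ** W) ** A"
    by (simp only: comm matrix_mul_assoc)
  also have "\<dots> = G ** G ** A"
    by (simp only: XW)
  finally show ?thesis .
qed

lemma is_wdrazin_drazin_sq:
  assumes d: "is_drazin (A ** W) G m"
  shows "is_wdrazin A W (G ** G ** A)"
proof -
  define M where "M = A ** W"
  define X where "X = G ** G ** A"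
  have dM: "is_drazin M G m"
    using d by (simp add: M_def)
  then have c: "M ** G = G ** M" and g: "G ** M ** G = G"
    by (simp_all add: is_drazin_def)
  have GGM: "G ** G ** M = G"
    using dM by (rule drazin_sq_mult)
  have MGG: "M ** G ** G = G"
    using dM by (rule mult_drazin_sq)
  have "A ** W ** X = (M ** G ** G) ** A" and "X ** W ** A = (G ** G ** M) ** A"
    by (simp_all add: X_def M_def matrix_mul_assoc)
  then have comm: "A ** W ** X = X ** W ** A"
    by (simp only: MGG GGM)
  have "X ** W ** A ** W ** X = (G ** G ** M) ** (M ** G ** G) ** A"
    by (simp add: X_def M_def matrix_mul_assoc)
  then have outer: "X ** W ** A ** W ** X = X"
    by (simp only: MGG GGM X_def)
  have "A ** W ** X ** W ** A ** W = M ** (G ** G ** M) ** M"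
    by (simp add: X_def M_def matrix_mul_assoc)
  then have "A ** W ** X ** W ** A ** W = M ** G ** M"
    by (simp only: GGM)
  then have "(A - A ** W ** X ** W ** A) ** W = M - M ** G ** M"
    by (simp add: matrix_diff_rdistrib M_def)
  moreover have "nilpotent_mat (M - M ** G ** M)"
    using drazin_iff_nilpotent[OF c g] dM by blast
  ultimately have "is_wdrazin A W X"
    using comm outer by (simp add: is_wdrazin_def)
  then show ?thesis
    by (simp only: X_def)
qed

lemma wdrazin_eq:
  assumes "is_drazin (A ** W) G m"
  shows "wdrazin A W = G ** G ** A"
  unfolding wdrazin_def
  using is_wdrazin_drazin_sq[OF assms] is_wdrazin_imp_eq[OF assms] by (rule the_equality)

lemma wdrazin_mult_weight:
  assumes "is_drazin (A ** W) G m"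
  shows "wdrazin A W ** W = G"
  using drazin_sq_mult[OF assms] by (simp add: wdrazin_eq[OF assms] matrix_mul_assoc)

definition windex :: "'n::finite cmat \<Rightarrow> 'n cmat \<Rightarrow> nat" where
  "windex A W = max (ind (A ** W)) (ind (W ** A))"

definition wproj :: "'n::finite cmat \<Rightarrow> 'n cmat \<Rightarrow> 'n cmat" where
  "wproj A W = mpow (W ** A) (windex A W) ** mp_inv (mpow (W ** A) (windex A W))"

lemma is_wcoreEP_iff_wproj:
  "is_wcoreEP A W X \<longleftrightarrow>
     W ** A ** W ** X = wproj A W \<and> mrange X \<subseteq> mrange (mpow (A ** W) (windex A W))"
  by (simp add: is_wcoreEP_def wproj_def windex_def Let_def)

lemma wproj_hermitian: "ctrans (wproj A W) = wproj A W"
  using mp_inv_is_moore_penrose unfolding wproj_def is_moore_penrose_def by blast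

lemma weight_mult_drazin_eq_mpow_mult:
  assumes "is_drazin (A ** W) G m"
  shows "W ** G = mpow (W ** A) k ** (W ** mpow G (Suc k))"
proof -
  have Gk: "mpow (A ** W) k ** mpow G (Suc k) = G"
    using assms commuting_outer_inverse_mpow_right unfolding is_drazin_def by blast
  have "W ** G = W ** (mpow (A ** W) k ** mpow G (Suc k))"
    by (simp only: Gk)
  also have "\<dots> = mpow (W ** A) k ** (W ** mpow G (Suc k))"
    by (simp only: mpow_push_through matrix_mul_assoc)
  finally show ?thesis .
qed

text \<open>Together with the previous lemma: \<open>R((WA)\<^sup>k) = R(WG)\<close> once \<open>k\<close> bounds both indices.\<close>

lemma mpow_eq_weight_mult_drazin_mult:
  assumes d: "is_drazin (A ** W) G m" and "ind (A ** W) \<le> k" and "ind (W ** A) \<le> k"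
  shows "\<exists>Y. mpow (W ** A) k = W ** G ** Y"
proof -
  obtain H n where dH: "is_drazin (W ** A) H n"
    using drazin_exists by blast
  have "mpow (W ** A) k = mpow (W ** A) (Suc k) ** H"
    using mpow_Suc_mult_drazin[OF dH \<open>ind (W ** A) \<le> k\<close>] by (rule sym)
  also have "\<dots> = W ** mpow (A ** W) k ** A ** H"
    by (simp only: mpow_Suc_right mpow_push_through matrix_mul_assoc)
  also have "\<dots> = W ** (G ** mpow (A ** W) (Suc k)) ** A ** H"
    by (simp only: drazin_mult_mpow_Suc[OF d \<open>ind (A ** W) \<le> k\<close>])
  also have "\<dots> = W ** G ** (mpow (A ** W) (Suc k) ** A ** H)"
    by (simp only: matrix_mul_assoc)
  finally show ?thesis ..
qed

lemma wproj_mult_weight_drazin: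
  assumes "is_drazin (A ** W) G m"
  shows "wproj A W ** (W ** G) = W ** G"
proof -
  let ?K = "mpow (W ** A) (windex A W)"
  have "?K ** mp_inv ?K ** ?K = ?K"
    using mp_inv_is_moore_penrose unfolding is_moore_penrose_def by blast
  then show ?thesis
    unfolding wproj_def weight_mult_drazin_eq_mpow_mult[OF assms, of "windex A W"]
    by (simp add: matrix_mul_assoc)
qed

lemma wproj_eq_weight_mult_drazin_mult:
  assumes d: "is_drazin (A ** W) G m"
  shows "\<exists>Y. wproj A W = W ** G ** Y"
proof -
  let ?K = "mpow (W ** A) (windex A W)"
  have "ind (A ** W) \<le> windex A W" and "ind (W ** A) \<le> windex A W"
    by (simp_all add: windex_def)
  then obtain Y where "?K = W ** G ** Y"
    using mpow_eq_weight_mult_drazin_mult[OF d] by blast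
  then have "wproj A W = W ** G ** (Y ** mp_inv ?K)"
    unfolding wproj_def by (simp add: matrix_mul_assoc)
  then show ?thesis ..
qed

lemma weight_drazin_mult_wproj:
  assumes d: "is_drazin (A ** W) G m"
  shows "W ** G ** A ** wproj A W = wproj A W"
proof -
  obtain Y where Y: "wproj A W = W ** G ** Y"
    using wproj_eq_weight_mult_drazin_mult[OF d] by blast
  have "W ** G ** A ** (W ** G ** Y) = W ** (G ** (A ** W) ** G) ** Y"
    by (simp add: matrix_mul_assoc)
  also have "\<dots> = W ** G ** Y"
    using d by (simp add: is_drazin_def)
  finally show ?thesis
    using Y by simp
qed

lemma is_wcoreEP_drazin_sq:
  assumes d: "is_drazin (A ** W) G m"
  shows "is_wcoreEP A W (G ** G ** A ** wproj A W)"
proof -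
  define M where "M = A ** W"
  define P where "P = wproj A W"
  define k where "k = windex A W"
  have dM: "is_drazin M G m"
    using d by (simp add: M_def)
  have MGG: "M ** G ** G = G"
    using dM by (rule mult_drazin_sq)
  have Gk: "mpow M k ** mpow G (Suc k) = G"
    using dM commuting_outer_inverse_mpow_right unfolding is_drazin_def by blast
  have "W ** A ** W ** (G ** G ** A ** P) = W ** (M ** G ** G) ** A ** P"
    by (simp add: M_def matrix_mul_assoc)
  then have "W ** A ** W ** (G ** G ** A ** P) = P"
    using weight_drazin_mult_wproj[OF d] by (simp add: MGG P_def)
  moreover have "mrange (G ** G ** A ** P) \<subseteq> mrange (mpow M k)"
  proof -
    have "G ** G ** A ** P = (mpow M k ** mpow G (Suc k)) ** G ** A ** P"
      by (simp only: Gk)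
    also have "\<dots> = mpow M k ** (mpow G (Suc k) ** G ** A ** P)"
      by (simp only: matrix_mul_assoc)
    finally show ?thesis
      by (metis mrange_mult_subset)
  qed
  ultimately show ?thesis
    by (simp add: is_wcoreEP_iff_wproj P_def M_def k_def)
qed

lemma is_wcoreEP_imp_eq:
  assumes d: "is_drazin (A ** W) G m" and "is_wcoreEP A W X"
  shows "X = G ** G ** A ** wproj A W"
proof -
  define M where "M = A ** W"
  define k where "k = windex A W"
  have dM: "is_drazin M G m"
    using d by (simp add: M_def)
  then have c: "M ** G = G ** M"
    by (simp add: is_drazin_def)
  have GGM: "G ** G ** M = G"
    using dM by (rule drazin_sq_mult)
  have "ind M \<le> k"
    by (simp add: M_def k_def windex_def)
  have "M ** G ** mpow M k = G ** mpow M (Suc k)"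
    by (simp only: c mpow.simps(2) matrix_mul_assoc)
  also have "\<dots> = mpow M k"
    using dM \<open>ind M \<le> k\<close> by (rule drazin_mult_mpow_Suc)
  finally have EMk: "M ** G ** mpow M k = mpow M k" .
  from \<open>is_wcoreEP A W X\<close> have WAWX: "W ** A ** W ** X = wproj A W"
    and range: "mrange X \<subseteq> mrange (mpow M k)"
    by (simp_all add: is_wcoreEP_iff_wproj M_def k_def)
  have "X = M ** G ** X"
    using mrange_subset_imp_fixed[OF range EMk] by simp
  also have "\<dots> = (G ** G ** M) ** M ** X"
    by (simp only: GGM c)
  also have "\<dots> = G ** G ** A ** (W ** A ** W ** X)"
    by (simp add: M_def matrix_mul_assoc)
  also have "\<dots> = G ** G ** A ** wproj A W"
    by (simp only: WAWX)
  finally show ?thesis .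
qed

lemma wcoreEP_eq:
  assumes "is_drazin (A ** W) G m"
  shows "wcoreEP A W = G ** G ** A ** wproj A W"
  unfolding wcoreEP_def
  using is_wcoreEP_drazin_sq[OF assms] is_wcoreEP_imp_eq[OF assms] by (rule the_equality)

lemma is_wcore_weight_drazin:
  assumes d: "is_drazin (A ** W) G m" and BW: "B ** W = G"
  shows "is_wcore B W (G ** A ** W ** A ** wproj A W)"
proof -
  define M where "M = A ** W"
  define P where "P = wproj A W"
  define X where "X = G ** A ** W ** A ** P"
  have dM: "is_drazin M G m"
    using d by (simp add: M_def)
  then have g: "G ** M ** G = G"
    by (simp add: is_drazin_def)
  have GGM: "G ** G ** M = G"
    using dM by (rule drazin_sq_mult)
  have MGG: "M ** G ** G = G"
    using dM by (rule mult_drazin_sq)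
  have PWG: "P ** (W ** G) = W ** G"
    unfolding P_def using d by (rule wproj_mult_weight_drazin)
  have WGAP: "W ** G ** A ** P = P"
    unfolding P_def using d by (rule weight_drazin_mult_wproj)
  have "B ** ((W ** X) ** (W ** X)) = (G ** G ** M) ** A ** (P ** (W ** G)) ** M ** A ** P"
    by (simp add: X_def BW M_def matrix_mul_assoc)
  also have "\<dots> = (G ** M ** G) ** M ** A ** P"
    by (simp only: GGM PWG) (simp add: M_def matrix_mul_assoc)
  also have "\<dots> = X"
    by (simp only: g) (simp add: X_def M_def matrix_mul_assoc)
  finally have 1: "B ** ((W ** X) ** (W ** X)) = X" .
  have WBW: "W ** B ** W = W ** G"
    by (simp only: BW flip: matrix_mul_assoc)
  have "W ** B ** W ** X = W ** (G ** G ** M) ** A ** P"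
    by (simp add: WBW X_def M_def matrix_mul_assoc)
  also have "\<dots> = P"
    by (simp only: GGM WGAP)
  finally have 2: "ctrans (W ** B ** W ** X) = W ** B ** W ** X"
    by (simp add: P_def wproj_hermitian)
  have "X ** W ** ((B ** W) ** (B ** W)) = G ** M ** A ** (P ** (W ** G)) ** G"
    by (simp add: BW X_def M_def matrix_mul_assoc)
  also have "\<dots> = G ** M ** (M ** G ** G)"
    by (simp only: PWG) (simp add: M_def matrix_mul_assoc)
  also have "\<dots> = B ** W"
    by (simp only: MGG g BW)
  finally have 3: "X ** W ** ((B ** W) ** (B ** W)) = B ** W" .
  show ?thesis
    using 1 2 3 unfolding is_wcore_def X_def P_def by blast
qed

lemma is_wcore_weight_drazin_proj:
  assumes d: "is_drazin (A ** W) G m" and BW: "B ** W = G" and "is_wcore B W X"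
  shows "W ** G ** X = wproj A W"
proof -
  define M where "M = A ** W"
  define Q where "Q = W ** G ** X"
  have dM: "is_drazin M G m"
    using d by (simp add: M_def)
  then have c: "M ** G = G ** M" and g: "G ** M ** G = G"
    by (simp_all add: is_drazin_def)
  have GGM: "G ** G ** M = G"
    using dM by (rule drazin_sq_mult)
  from \<open>is_wcore B W X\<close> have "ctrans (W ** (B ** W) ** X) = W ** (B ** W) ** X"
    and "X ** W ** (B ** W) ** (B ** W) = B ** W"
    by (simp_all add: is_wcore_def matrix_mul_assoc)
  then have herm: "ctrans Q = Q" and XWGG: "X ** W ** G ** G = G"
    by (simp_all only: BW Q_def)
  have "X ** W ** G = X ** W ** (G ** G ** M)"
    by (simp only: GGM)
  also have "\<dots> = (X ** W ** G ** G) ** M"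
    by (simp only: matrix_mul_assoc)
  also have "\<dots> = M ** G"
    by (simp only: XWGG c)
  finally have XWG: "X ** W ** G = M ** G" .
  have "Q ** (W ** G) = W ** G ** (X ** W ** G)"
    by (simp add: Q_def matrix_mul_assoc)
  also have "\<dots> = W ** (G ** M ** G)"
    by (simp only: XWG matrix_mul_assoc)
  finally have QWG: "Q ** (W ** G) = W ** G"
    by (simp only: g)
  obtain Y where PY: "wproj A W = W ** G ** Y"
    using wproj_eq_weight_mult_drazin_mult[OF d] by blast
  have "wproj A W ** Q = Q"
    using wproj_mult_weight_drazin[OF d] by (simp add: Q_def matrix_mul_assoc)
  moreover have "Q ** wproj A W = wproj A W"
    using QWG by (simp add: PY matrix_mul_assoc)
  ultimately have "Q = wproj A W"
    by (rule hermitian_mutual_absorb_eq[OF wproj_hermitian herm])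
  then show ?thesis
    by (simp only: Q_def)
qed

lemma is_wcore_weight_drazin_unique:
  assumes d: "is_drazin (A ** W) G m" and BW: "B ** W = G" and X: "is_wcore B W X"
  shows "X = G ** A ** W ** A ** wproj A W"
proof -
  define M where "M = A ** W"
  have dM: "is_drazin M G m"
    using d by (simp add: M_def)
  then have c: "M ** G = G ** M"
    by (simp add: is_drazin_def)
  have MGG: "M ** G ** G = G"
    using dM by (rule mult_drazin_sq)
  from X have "B ** W ** X ** W ** X = X"
    by (simp add: is_wcore_def matrix_mul_assoc)
  then have XWX: "G ** X ** W ** X = X"
    by (simp only: BW)
  have "M ** G ** X = M ** G ** (G ** X ** W ** X)"
    by (simp only: XWX)
  also have "\<dots> = (M ** G ** G) ** X ** W ** X"
    by (simp only: matrix_mul_assoc)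
  also have "\<dots> = X"
    by (simp only: MGG XWX)
  finally have MGX: "M ** G ** X = X" .
  have proj: "wproj A W = W ** G ** X"
    using is_wcore_weight_drazin_proj[OF assms] by (rule sym)
  have "G ** A ** W ** A ** wproj A W = G ** M ** (M ** G ** X)"
    by (simp add: proj M_def matrix_mul_assoc)
  also have "\<dots> = G ** M ** X"
    by (simp only: MGX)
  also have "\<dots> = M ** G ** X"
    by (simp only: c)
  also have "\<dots> = X"
    by (rule MGX)
  finally show ?thesis
    by (rule sym)
qed

theorem corollary4p3:
  fixes A W :: "complex^'n::finite^'n"
  shows "(\<exists>!X. is_wcore (wdrazin A W) W X)
    \<and> wcoreEP A W = ((wdrazin A W ** W) ** (wdrazin A W ** W)) ** wcore (wdrazin A W) W"
proof -
  obtain G m where d: "is_drazin (A ** W) G m"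
    using drazin_exists by blast
  define Xc where "Xc = G ** A ** W ** A ** wproj A W"
  have BW: "wdrazin A W ** W = G"
    using d by (rule wdrazin_mult_weight)
  have core: "is_wcore (wdrazin A W) W X \<longleftrightarrow> X = Xc" for X
    using is_wcore_weight_drazin[OF d BW] is_wcore_weight_drazin_unique[OF d BW]
    unfolding Xc_def by blast
  have "\<exists>!X. is_wcore (wdrazin A W) W X" and "wcore (wdrazin A W) W = Xc"
    unfolding wcore_def core by simp_all
  moreover have "G ** G ** Xc = wcoreEP A W"
  proof -
    have "G ** G ** Xc = G ** (G ** G ** (A ** W)) ** A ** wproj A W"
      by (simp add: Xc_def matrix_mul_assoc)
    then show ?thesis
      by (simp only: drazin_sq_mult[OF d] wcoreEP_eq[OF d])
  qed
  ultimately show ?thesis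
    by (simp add: BW)
qed

end
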